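(* Let $S=\{(d/p)_G : G \text{ a finite digraph with at least one vertex}\}$. Then $S$ is dense in the interval $[0,1/2]$; that is, for every $r\in[0,1/2]$ and every $\varepsilon>0$ there is a finite digraph $G$ with $|(d/p)_G - r|<\varepsilon$.
   Context: Digraphs are finite, with no loops. A permutation in a digraph $G=(V,E)$ is a bijection $f:V\to V$ such that for every $v\in V$ either $f(v)=v$ or $(v,f(v))\in E$. A derangement in $G$ is a permutation of $G$ that fixes no vertex. $(d/p)_G$ denotes the number of derangements of $G$ divided by the number of permutations of $G$ (the identity is always a permutation, so this is well defined). *)

theory Defs
  imports Complex_Main
begin

definition digraph :: "'a set \<Rightarrow> ('a \<times> 'a) set \<Rightarrow> bool" where
  "digraph V E \<longleftrightarrow> finite V \<and> E \<subseteq> V \<times> V \<and> (\<forall>v. (v, v) \<notin> E)"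

definition graph_perms :: "'a set \<Rightarrow> ('a \<times> 'a) set \<Rightarrow> ('a \<Rightarrow> 'a) set" where
  "graph_perms V E = {f. bij_betw f V V \<and> (\<forall>v\<in>V. f v = v \<or> (v, f v) \<in> E)
                         \<and> (\<forall>v. v \<notin> V \<longrightarrow> f v = v)}"

definition graph_derangements :: "'a set \<Rightarrow> ('a \<times> 'a) set \<Rightarrow> ('a \<Rightarrow> 'a) set" where
  "graph_derangements V E = {f \<in> graph_perms V E. \<forall>v\<in>V. f v \<noteq> v}"

definition dp_ratio :: "'a set \<Rightarrow> ('a \<times> 'a) set \<Rightarrow> real" where
  "dp_ratio V E = real (card (graph_derangements V E)) / real (card (graph_perms V E))"

end

theory Submission
  imports Defs "HOL-Combinatorics.Permutations" "HOL-Library.FuncSet"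
begin

text \<open>Splitting a vertex \<open>v\<close> of a digraph \<open>G\<close> (a fresh vertex takes over the out-edges of \<open>v\<close> and
  forms a 2-cycle with \<open>v\<close>) adds to both the number of permutations and the number of derangements
  the corresponding number for \<open>G - v\<close>. Take \<open>k\<close> layers of \<open>m\<close> vertices, each vertex pointing to
  all vertices of the next layer cyclically: a permutation moves the same number \<open>j\<close> of vertices in
  every layer, so there are \<open>\<Sum>\<^sub>j (m choose j)\<^sup>k (j!)\<^sup>k\<close> permutations and \<open>(m!)\<^sup>k\<close> derangements.
  Splitting one vertex in each of \<open>t < k\<close> layers keeps the derangement count \<open>(m!)\<^sup>k\<close>, while the
  permutation count becomes \<open>(m!)\<^sup>k (1 + (1 + 1/m)\<^sup>t)\<close> up to a relative error \<open>2\<^sup>t m / 2\<^sup>k\<close>.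
  Since the ratios \<open>1 / (1 + (1 + 1/m)\<^sup>t)\<close> are dense in \<open>(0, 1/2]\<close>, so are the values of \<open>d/p\<close>.\<close>

lemma graph_perms_permutes:
  "graph_perms V E = {f. f permutes V \<and> (\<forall>v\<in>V. f v = v \<or> (v, f v) \<in> E)}"
  unfolding graph_perms_def
  by (auto intro: bij_imp_permutes dest: permutes_imp_bij simp: permutes_not_in)

lemma finite_graph_perms: "finite V \<Longrightarrow> finite (graph_perms V E)"
  by (rule finite_subset[OF _ finite_permutations]) (auto simp: graph_perms_permutes)

lemma finite_graph_derangements: "finite V \<Longrightarrow> finite (graph_derangements V E)"
  by (simp add: graph_derangements_def finite_graph_perms)

lemma card_filter_complement:
  assumes "finite A" shows "card {x \<in> A. P x} + card {x \<in> A. \<not> P x} = card A"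
proof -
  have "A = {x \<in> A. P x} \<union> {x \<in> A. \<not> P x}" by blast
  thus ?thesis using assms by (metis (no_types, lifting) card_Un_disjoint disjoint_iff finite_Un mem_Collect_eq)
qed

definition split_vertex :: "('a \<times> 'a) set \<Rightarrow> 'a \<Rightarrow> 'a \<Rightarrow> ('a \<times> 'a) set" where
  "split_vertex E v w = {e \<in> E. fst e \<noteq> v} \<union> {(w, y) | y. (v, y) \<in> E} \<union> {(v, w), (w, v)}"

definition delete_vertex :: "('a \<times> 'a) set \<Rightarrow> 'a \<Rightarrow> ('a \<times> 'a) set" where
  "delete_vertex E v = {e \<in> E. fst e \<noteq> v \<and> snd e \<noteq> v}"

lemma digraph_split_vertex:
  assumes "digraph V E" "v \<in> V" "w \<notin> V"
  shows "digraph (insert w V) (split_vertex E v w)"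
  using assms unfolding digraph_def split_vertex_def by force

lemma delete_split_vertex:
  "s \<noteq> v \<Longrightarrow> s \<noteq> w \<Longrightarrow>
    delete_vertex (split_vertex E v w) s = split_vertex (delete_vertex E s) v w"
  unfolding delete_vertex_def split_vertex_def by force

lemma permutes_insert_fixed: "p permutes insert w V \<Longrightarrow> p w = w \<Longrightarrow> p permutes V"
  by (rule permutes_superset) auto

lemma inj_on_comp_transpose: "inj_on (\<lambda>f. f \<circ> Transposition.transpose a b) X"
  by (rule inj_onI) (metis comp_assoc comp_id transpose_comp_involutory)

lemma inj_on_transpose_comp: "inj_on (\<lambda>f. Transposition.transpose a b \<circ> f) X"
  by (rule inj_onI) (metis comp_assoc id_comp transpose_comp_involutory)

text \<open>Splitting \<open>v\<close> into \<open>v\<close> and a fresh vertex \<open>w\<close>: a permutation of the new graph either fixes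
  \<open>v\<close> (and then \<open>w\<close>), or sends \<open>v\<close> to \<open>w\<close>; in the latter case it is \<open>f \<circ> (v w)\<close> for a permutation \<open>f\<close>
  of the old graph moving \<open>v\<close>, unless it swaps \<open>v\<close> and \<open>w\<close>, when it is \<open>(v w) \<circ> h\<close> for a permutation
  \<open>h\<close> of the graph without \<open>v\<close>.\<close>

context
  fixes V :: "'a set" and E v w
  assumes digraph: "digraph V E" and v: "v \<in> V" and w: "w \<notin> V"
begin

private abbreviation (input) "V' \<equiv> insert w V"
private abbreviation (input) "E' \<equiv> split_vertex E v w"
private abbreviation (input) "\<tau> \<equiv> Transposition.transpose v w"

private lemma edges_in_V: "E \<subseteq> V \<times> V"
  using digraph by (simp add: digraph_def)

private lemma v_neq_w: "v \<noteq> w"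
  using v w by auto

private lemma transpose_permutes: "\<tau> permutes V'"
  using v by (intro permutes_swap_id) auto

private lemma perm_at_v: "f \<in> graph_perms V' E' \<Longrightarrow> f v = v \<or> f v = w"
  using v v_neq_w by (auto simp: graph_perms_permutes split_vertex_def)

private lemma perms_fixing_v:
  "{f \<in> graph_perms V' E'. f v = v} = {f \<in> graph_perms V E. f v = v}"
proof (intro set_eqI iffI)
  fix f assume "f \<in> {f \<in> graph_perms V' E'. f v = v}"
  hence fp: "f permutes V'" and fe: "\<forall>x\<in>V'. f x = x \<or> (x, f x) \<in> E'" and fv: "f v = v"
    by (auto simp: graph_perms_permutes)
  have "f w = w"
  proof (rule ccontr)
    assume "f w \<noteq> w"
    obtain x where x: "x \<in> V'" "f x = w"
      using permutes_image[OF fp] by (metis insertI1 imageE)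
    with \<open>f w \<noteq> w\<close> fv v_neq_w have "x \<noteq> w" "x \<noteq> v" "(x, w) \<in> E'"
      using fe by auto
    thus False using edges_in_V w by (auto simp: split_vertex_def)
  qed
  hence "f permutes V" using fp by (rule permutes_insert_fixed[rotated])
  moreover have "\<forall>x\<in>V. f x = x \<or> (x, f x) \<in> E"
    using fe fv w by (auto simp: split_vertex_def)
  ultimately show "f \<in> {f \<in> graph_perms V E. f v = v}" using fv by (simp add: graph_perms_permutes)
next
  fix f assume "f \<in> {f \<in> graph_perms V E. f v = v}"
  hence fp: "f permutes V" and fe: "\<forall>x\<in>V. f x = x \<or> (x, f x) \<in> E" and fv: "f v = v"
    by (auto simp: graph_perms_permutes)
  have "f permutes V'" using fp by (rule permutes_subset) auto
  moreover have "\<forall>x\<in>V'. f x = x \<or> (x, f x) \<in> E'"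
    using fe fv permutes_not_in[OF fp w] by (auto simp: split_vertex_def)
  ultimately show "f \<in> {f \<in> graph_perms V' E'. f v = v}" using fv by (simp add: graph_perms_permutes)
qed

private lemma perms_moving_v:
  "{f \<in> graph_perms V' E'. f v = w \<and> f w \<noteq> v} = (\<lambda>f. f \<circ> \<tau>) ` {f \<in> graph_perms V E. f v \<noteq> v}"
proof (intro set_eqI iffI)
  fix f assume "f \<in> {f \<in> graph_perms V' E'. f v = w \<and> f w \<noteq> v}"
  hence fp: "f permutes V'" and fe: "\<forall>x\<in>V'. f x = x \<or> (x, f x) \<in> E'"
    and fv: "f v = w" and fw: "f w \<noteq> v"
    by (auto simp: graph_perms_permutes)
  have "f w \<noteq> w" using fv v_neq_w permutes_inj[OF fp] by (metis injD)
  hence "(v, f w) \<in> E" using fe fw v_neq_w edges_in_V w by (auto simp: split_vertex_def)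
  have gp: "f \<circ> \<tau> permutes V'" using transpose_permutes fp by (rule permutes_compose)
  have "f \<circ> \<tau> permutes V" using permutes_insert_fixed[OF gp] fv by simp
  moreover have "\<forall>x\<in>V. (f \<circ> \<tau>) x = x \<or> (x, (f \<circ> \<tau>) x) \<in> E"
  proof
    fix x assume "x \<in> V"
    show "(f \<circ> \<tau>) x = x \<or> (x, (f \<circ> \<tau>) x) \<in> E"
    proof (cases "x = v")
      case False
      moreover have "x \<noteq> w" using \<open>x \<in> V\<close> w by auto
      ultimately have "(f \<circ> \<tau>) x = f x" by simp
      thus ?thesis using fe \<open>x \<in> V\<close> False w by (auto simp: split_vertex_def)
    qed (use \<open>(v, f w) \<in> E\<close> in simp)
  qed
  ultimately have "f \<circ> \<tau> \<in> {f \<in> graph_perms V E. f v \<noteq> v}"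
    using fw by (simp add: graph_perms_permutes)
  moreover have "f = (f \<circ> \<tau>) \<circ> \<tau>" by (simp add: comp_assoc)
  ultimately show "f \<in> (\<lambda>f. f \<circ> \<tau>) ` {f \<in> graph_perms V E. f v \<noteq> v}" by blast
next
  fix g assume "g \<in> (\<lambda>f. f \<circ> \<tau>) ` {f \<in> graph_perms V E. f v \<noteq> v}"
  then obtain f where f: "f \<in> graph_perms V E" "f v \<noteq> v" and g: "g = f \<circ> \<tau>" by blast
  have fp: "f permutes V" and fe: "\<forall>x\<in>V. f x = x \<or> (x, f x) \<in> E"
    using f(1) by (auto simp: graph_perms_permutes)
  have fw: "f w = w" using permutes_not_in[OF fp w] .
  have "(v, f v) \<in> E" using fe v f(2) by auto
  have "f permutes V'" using fp by (rule permutes_subset) auto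
  hence "g permutes V'" unfolding g using transpose_permutes by (rule permutes_compose[rotated])
  moreover have "\<forall>x\<in>V'. g x = x \<or> (x, g x) \<in> E'"
  proof
    fix x assume x: "x \<in> V'"
    consider "x = v" | "x = w" | "x \<in> V" "x \<noteq> v" "x \<noteq> w" using x by blast
    thus "g x = x \<or> (x, g x) \<in> E'"
    proof cases
      case 3
      hence "g x = f x" unfolding g by simp
      thus ?thesis using fe 3 by (auto simp: split_vertex_def)
    qed (use fw \<open>(v, f v) \<in> E\<close> in \<open>auto simp: g split_vertex_def\<close>)
  qed
  ultimately show "g \<in> {f \<in> graph_perms V' E'. f v = w \<and> f w \<noteq> v}"
    using fw f(2) unfolding g by (simp add: graph_perms_permutes)
qed

private lemma perms_swapping_v:
  "{f \<in> graph_perms V' E'. f v = w \<and> f w = v} = (\<lambda>h. \<tau> \<circ> h) ` graph_perms (V - {v}) (delete_vertex E v)"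
proof (intro set_eqI iffI)
  fix f assume "f \<in> {f \<in> graph_perms V' E'. f v = w \<and> f w = v}"
  hence fp: "f permutes V'" and fe: "\<forall>x\<in>V'. f x = x \<or> (x, f x) \<in> E'"
    and fv: "f v = w" and fw: "f w = v"
    by (auto simp: graph_perms_permutes)
  have other: "f x \<noteq> v \<and> f x \<noteq> w" if "x \<noteq> v" "x \<noteq> w" for x
    using that fv fw permutes_inj[OF fp] by (metis injD)
  have "\<tau> \<circ> f permutes V'" using fp transpose_permutes by (rule permutes_compose)
  hence "\<tau> \<circ> f permutes V - {v}"
    by (rule permutes_superset) (use fv fw in auto)
  moreover have "\<forall>x\<in>V - {v}. (\<tau> \<circ> f) x = x \<or> (x, (\<tau> \<circ> f) x) \<in> delete_vertex E v"
  proof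
    fix x assume x: "x \<in> V - {v}"
    hence "x \<noteq> w" using w by auto
    hence "(\<tau> \<circ> f) x = f x" "f x \<noteq> v" "f x \<noteq> w" using other x by auto
    thus "(\<tau> \<circ> f) x = x \<or> (x, (\<tau> \<circ> f) x) \<in> delete_vertex E v"
      using fe x \<open>x \<noteq> w\<close> by (auto simp: split_vertex_def delete_vertex_def)
  qed
  ultimately have "\<tau> \<circ> f \<in> graph_perms (V - {v}) (delete_vertex E v)"
    by (simp add: graph_perms_permutes)
  moreover have "f = \<tau> \<circ> (\<tau> \<circ> f)" by (simp flip: comp_assoc)
  ultimately show "f \<in> (\<lambda>h. \<tau> \<circ> h) ` graph_perms (V - {v}) (delete_vertex E v)" by blast
next
  fix g assume "g \<in> (\<lambda>h. \<tau> \<circ> h) ` graph_perms (V - {v}) (delete_vertex E v)"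
  then obtain h where h: "h \<in> graph_perms (V - {v}) (delete_vertex E v)" and g: "g = \<tau> \<circ> h" by blast
  have hp: "h permutes V - {v}" and he: "\<forall>x\<in>V - {v}. h x = x \<or> (x, h x) \<in> delete_vertex E v"
    using h by (auto simp: graph_perms_permutes)
  have hvw: "h v = v" "h w = w" using permutes_not_in[OF hp] w by auto
  have "h permutes V'" using hp by (rule permutes_subset) auto
  hence "g permutes V'" unfolding g using transpose_permutes by (rule permutes_compose)
  moreover have "\<forall>x\<in>V'. g x = x \<or> (x, g x) \<in> E'"
  proof
    fix x assume x: "x \<in> V'"
    show "g x = x \<or> (x, g x) \<in> E'"
    proof (cases "x = v \<or> x = w")
      case True thus ?thesis using hvw unfolding g by (auto simp: split_vertex_def)
    next
      case False
      hence "h x \<in> V - {v}" using x permutes_in_image[OF hp] by auto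
      moreover have "h x \<noteq> w" using \<open>h x \<in> V - {v}\<close> w by auto
      ultimately have "g x = h x" unfolding g by simp
      thus ?thesis using he x False w by (auto simp: split_vertex_def delete_vertex_def)
    qed
  qed
  ultimately show "g \<in> {f \<in> graph_perms V' E'. f v = w \<and> f w = v}"
    using hvw unfolding g by (simp add: graph_perms_permutes)
qed

private lemma finite_V: "finite V"
  using digraph by (simp add: digraph_def)

lemma card_graph_perms_split_vertex:
  "card (graph_perms V' E') = card (graph_perms V E) + card (graph_perms (V - {v}) (delete_vertex E v))"
proof -
  let ?P' = "graph_perms V' E'" and ?P = "graph_perms V E"
  have fin: "finite ?P'" "finite ?P" using finite_V by (simp_all add: finite_graph_perms)
  have "{f \<in> ?P'. f v \<noteq> v} = {f \<in> ?P'. f v = w \<and> f w \<noteq> v} \<union> {f \<in> ?P'. f v = w \<and> f w = v}"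
    using perm_at_v v_neq_w by force
  hence "card {f \<in> ?P'. f v \<noteq> v}
      = card {f \<in> ?P'. f v = w \<and> f w \<noteq> v} + card {f \<in> ?P'. f v = w \<and> f w = v}"
    by (simp add: card_Un_disjoint fin(1) disjoint_iff)
  also have "\<dots> = card {f \<in> ?P. f v \<noteq> v} + card (graph_perms (V - {v}) (delete_vertex E v))"
    by (simp add: perms_moving_v perms_swapping_v card_image inj_on_comp_transpose inj_on_transpose_comp)
  finally have moved: "card {f \<in> ?P'. f v \<noteq> v}
      = card {f \<in> ?P. f v \<noteq> v} + card (graph_perms (V - {v}) (delete_vertex E v))" .
  have "card ?P' = card {f \<in> ?P'. f v = v} + card {f \<in> ?P'. f v \<noteq> v}"
    using fin(1) by (rule card_filter_complement[symmetric])
  also have "\<dots> = card ?P + card (graph_perms (V - {v}) (delete_vertex E v))"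
    using card_filter_complement[OF fin(2), of "\<lambda>f. f v = v"] by (simp add: perms_fixing_v moved)
  finally show ?thesis .
qed

private lemma deranging_comp_transpose:
  assumes "f \<in> graph_perms V E" "f v \<noteq> v"
  shows "(\<forall>x\<in>V'. (f \<circ> \<tau>) x \<noteq> x) \<longleftrightarrow> (\<forall>x\<in>V. f x \<noteq> x)"
proof -
  have fp: "f permutes V" using assms(1) by (simp add: graph_perms_permutes)
  have at_v: "(f \<circ> \<tau>) v = w" using permutes_not_in[OF fp w] by simp
  have "f v \<in> V" using permutes_in_image[OF fp] v by simp
  hence at_w: "(f \<circ> \<tau>) w \<noteq> w" using w by auto
  have other: "(f \<circ> \<tau>) x = f x" if "x \<in> V" "x \<noteq> v" for x
    using that w by (metis comp_apply transpose_apply_other)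
  show ?thesis
  proof
    assume "\<forall>x\<in>V'. (f \<circ> \<tau>) x \<noteq> x"
    thus "\<forall>x\<in>V. f x \<noteq> x" using other assms(2) by (metis insertCI)
  next
    assume "\<forall>x\<in>V. f x \<noteq> x"
    thus "\<forall>x\<in>V'. (f \<circ> \<tau>) x \<noteq> x" using other at_v at_w v_neq_w by (metis insert_iff)
  qed
qed

private lemma deranging_transpose_comp:
  assumes "h \<in> graph_perms (V - {v}) (delete_vertex E v)"
  shows "(\<forall>x\<in>V'. (\<tau> \<circ> h) x \<noteq> x) \<longleftrightarrow> (\<forall>x\<in>V - {v}. h x \<noteq> x)"
proof -
  have hp: "h permutes V - {v}" using assms by (simp add: graph_perms_permutes)
  have at_vw: "(\<tau> \<circ> h) v = w" "(\<tau> \<circ> h) w = v" using permutes_not_in[OF hp] w by auto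
  have other: "(\<tau> \<circ> h) x = h x" if "x \<in> V - {v}" for x
  proof -
    have "h x \<in> V - {v}" using permutes_in_image[OF hp] that by simp
    hence "h x \<noteq> v" "h x \<noteq> w" using w by auto
    thus ?thesis by simp
  qed
  show ?thesis using at_vw other v_neq_w by (metis Diff_iff insert_iff singletonD)
qed

private lemma derangements_moving_v:
  "{f \<in> graph_derangements V' E'. f w \<noteq> v} = (\<lambda>f. f \<circ> \<tau>) ` graph_derangements V E"
proof -
  have "{f \<in> graph_derangements V' E'. f w \<noteq> v}
      = {f \<in> {f \<in> graph_perms V' E'. f v = w \<and> f w \<noteq> v}. \<forall>x\<in>V'. f x \<noteq> x}"
    using perm_at_v v by (auto simp: graph_derangements_def)
  also have "\<dots> = (\<lambda>f. f \<circ> \<tau>) ` {f \<in> {f \<in> graph_perms V E. f v \<noteq> v}. \<forall>x\<in>V'. (f \<circ> \<tau>) x \<noteq> x}"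
    unfolding perms_moving_v by blast
  also have "{f \<in> {f \<in> graph_perms V E. f v \<noteq> v}. \<forall>x\<in>V'. (f \<circ> \<tau>) x \<noteq> x} = graph_derangements V E"
  proof (intro set_eqI iffI)
    fix f assume "f \<in> {f \<in> {f \<in> graph_perms V E. f v \<noteq> v}. \<forall>x\<in>V'. (f \<circ> \<tau>) x \<noteq> x}"
    thus "f \<in> graph_derangements V E"
      using deranging_comp_transpose[of f] by (simp add: graph_derangements_def)
  next
    fix f assume "f \<in> graph_derangements V E"
    hence "f \<in> graph_perms V E" "\<forall>x\<in>V. f x \<noteq> x" by (simp_all add: graph_derangements_def)
    moreover from this(2) have "f v \<noteq> v" using v by blast
    ultimately show "f \<in> {f \<in> {f \<in> graph_perms V E. f v \<noteq> v}. \<forall>x\<in>V'. (f \<circ> \<tau>) x \<noteq> x}"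
      using deranging_comp_transpose[of f] by simp
  qed
  finally show ?thesis .
qed

private lemma derangements_swapping_v:
  "{f \<in> graph_derangements V' E'. f w = v}
    = (\<lambda>h. \<tau> \<circ> h) ` graph_derangements (V - {v}) (delete_vertex E v)"
proof -
  have "{f \<in> graph_derangements V' E'. f w = v}
      = {f \<in> {f \<in> graph_perms V' E'. f v = w \<and> f w = v}. \<forall>x\<in>V'. f x \<noteq> x}"
    using perm_at_v v by (auto simp: graph_derangements_def)
  also have "\<dots> = (\<lambda>h. \<tau> \<circ> h) ` {h \<in> graph_perms (V - {v}) (delete_vertex E v). \<forall>x\<in>V'. (\<tau> \<circ> h) x \<noteq> x}"
    unfolding perms_swapping_v by blast
  also have "{h \<in> graph_perms (V - {v}) (delete_vertex E v). \<forall>x\<in>V'. (\<tau> \<circ> h) x \<noteq> x}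
      = graph_derangements (V - {v}) (delete_vertex E v)"
  proof (intro set_eqI iffI)
    fix h assume "h \<in> {h \<in> graph_perms (V - {v}) (delete_vertex E v). \<forall>x\<in>V'. (\<tau> \<circ> h) x \<noteq> x}"
    thus "h \<in> graph_derangements (V - {v}) (delete_vertex E v)"
      using deranging_transpose_comp[of h] by (simp add: graph_derangements_def)
  next
    fix h assume "h \<in> graph_derangements (V - {v}) (delete_vertex E v)"
    thus "h \<in> {h \<in> graph_perms (V - {v}) (delete_vertex E v). \<forall>x\<in>V'. (\<tau> \<circ> h) x \<noteq> x}"
      using deranging_transpose_comp[of h] by (simp add: graph_derangements_def)
  qed
  finally show ?thesis .
qed

lemma card_graph_derangements_split_vertex:
  "card (graph_derangements V' E')
    = card (graph_derangements V E) + card (graph_derangements (V - {v}) (delete_vertex E v))"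
proof -
  have "finite (graph_derangements V' E')" using finite_V by (simp add: finite_graph_derangements)
  hence "card (graph_derangements V' E')
      = card {f \<in> graph_derangements V' E'. f w \<noteq> v} + card {f \<in> graph_derangements V' E'. \<not> f w \<noteq> v}"
    by (rule card_filter_complement[symmetric])
  thus ?thesis unfolding derangements_moving_v not_not derangements_swapping_v
    by (simp only: card_image[OF inj_on_comp_transpose] card_image[OF inj_on_transpose_comp])
qed

end

text \<open>Vertex \<open>i + k * x\<close> (with \<open>i < k\<close>) is element \<open>x\<close> of layer \<open>A i\<close>; every vertex has an edge to
  every vertex of the next layer, cyclically.\<close>

definition layered_vertices :: "nat \<Rightarrow> (nat \<Rightarrow> nat set) \<Rightarrow> nat set" where
  "layered_vertices k A = {v. v div k \<in> A (v mod k)}"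

definition layered_edges :: "nat \<Rightarrow> (nat \<Rightarrow> nat set) \<Rightarrow> (nat \<times> nat) set" where
  "layered_edges k A = {(u, w). u \<in> layered_vertices k A \<and> w \<in> layered_vertices k A
    \<and> w mod k = Suc (u mod k) mod k}"

definition bijections :: "'a set \<Rightarrow> 'b set \<Rightarrow> ('a \<Rightarrow> 'b) set" where
  "bijections X Y = {g \<in> X \<rightarrow>\<^sub>E Y. bij_betw g X Y}"

lemma card_bijections:
  assumes "finite X" "finite Y" "card X = card Y"
  shows "card (bijections X Y) = fact (card X)"
proof -
  obtain h where h: "bij_betw h X Y" using finite_same_card_bij[OF assms] by blast
  have inj: "inj_on (\<lambda>p. restrict (h \<circ> p) X) {p. p permutes X}"
  proof (rule inj_onI, rule ext)
    fix p q x assume p: "p \<in> {p. p permutes X}" and q: "q \<in> {p. p permutes X}"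
      and eq: "restrict (h \<circ> p) X = restrict (h \<circ> q) X"
    show "p x = q x"
    proof (cases "x \<in> X")
      case True
      hence "h (p x) = h (q x)" "p x \<in> X" "q x \<in> X"
        using fun_cong[OF eq, of x] p q by (auto simp: permutes_in_image)
      thus ?thesis using h by (auto simp: bij_betw_def inj_on_def)
    qed (use p q in \<open>simp add: permutes_not_in\<close>)
  qed
  have "bijections X Y = (\<lambda>p. restrict (h \<circ> p) X) ` {p. p permutes X}"
  proof (intro equalityI subsetI)
    fix g assume "g \<in> bijections X Y"
    hence g: "g \<in> X \<rightarrow>\<^sub>E Y" "bij_betw g X Y" by (auto simp: bijections_def)
    define p where "p x = (if x \<in> X then inv_into X h (g x) else x)" for x
    have "bij_betw (inv_into X h \<circ> g) X X" using bij_betw_trans[OF g(2) bij_betw_inv_into[OF h]] .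
    hence "bij_betw p X X" by (rule bij_betw_cong[THEN iffD1, rotated]) (simp add: p_def)
    hence "p permutes X" by (rule bij_imp_permutes) (simp add: p_def)
    moreover have "restrict (h \<circ> p) X = g"
      using g h by (auto simp: p_def bij_betw_def f_inv_into_f PiE_def extensional_def)
    ultimately show "g \<in> (\<lambda>p. restrict (h \<circ> p) X) ` {p. p permutes X}" by force
  next
    fix g assume "g \<in> (\<lambda>p. restrict (h \<circ> p) X) ` {p. p permutes X}"
    then obtain p where p: "p permutes X" and g: "g = restrict (h \<circ> p) X" by auto
    have "bij_betw (h \<circ> p) X Y" using bij_betw_trans[OF permutes_imp_bij[OF p] h] .
    thus "g \<in> bijections X Y"
      unfolding g bijections_def by (auto simp: bij_betw_restrict_eq bij_betw_def)
  qed
  thus ?thesis using card_image[OF inj] assms(1) by (simp add: card_permutations)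
qed

lemma layer_index_mod [simp]: "i < (k :: nat) \<Longrightarrow> (i + k * x) mod k = i"
  by simp

lemma layer_index_div [simp]: "i < (k :: nat) \<Longrightarrow> (i + k * x) div k = x"
  by simp

lemma mem_layered_vertices_iff: "v \<in> layered_vertices k A \<longleftrightarrow> v div k \<in> A (v mod k)"
  by (simp add: layered_vertices_def)

lemma layer_elem_mem_iff: "i < k \<Longrightarrow> i + k * x \<in> layered_vertices k A \<longleftrightarrow> x \<in> A i"
  by (simp add: layered_vertices_def)

context
  fixes k :: nat and A :: "nat \<Rightarrow> nat set"
  assumes k2: "2 \<le> k" and finA: "\<And>i. i < k \<Longrightarrow> finite (A i)"
begin

abbreviation "next_layer i \<equiv> Suc i mod k"

private lemma k_pos: "0 < k"
  using k2 by simp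

private lemma mod_k_less [simp]: "v mod k < k"
  using k_pos by simp

private lemma next_layer_less [simp]: "next_layer i < k"
  using k_pos by simp

private lemma next_layer_neq: "i < k \<Longrightarrow> next_layer i \<noteq> i"
proof
  assume "i < k" "next_layer i = i"
  show False
  proof (cases "Suc i < k")
    case True thus False using \<open>next_layer i = i\<close> by simp
  next
    case False hence "Suc i = k" using \<open>i < k\<close> by simp
    thus False using \<open>next_layer i = i\<close> k2 by simp
  qed
qed

private lemma next_layer_inj: "i < k \<Longrightarrow> i' < k \<Longrightarrow> next_layer i = next_layer i' \<Longrightarrow> i = i'"
proof -
  assume a: "i < k" "i' < k" "next_layer i = next_layer i'"
  have "Suc i \<le> k" "Suc i' \<le> k" using a by auto
  thus "i = i'" using a(3) by (cases "Suc i = k"; cases "Suc i' = k") auto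
qed

lemma finite_layered_vertices: "finite (layered_vertices k A)"
proof -
  have "layered_vertices k A \<subseteq> (\<Union>i<k. (\<lambda>x. i + k * x) ` A i)"
  proof
    fix v assume "v \<in> layered_vertices k A"
    hence "v div k \<in> A (v mod k)" by (simp add: layered_vertices_def)
    moreover have "v = v mod k + k * (v div k)" by simp
    ultimately show "v \<in> (\<Union>i<k. (\<lambda>x. i + k * x) ` A i)" using mod_k_less by blast
  qed
  moreover have "finite (\<Union>i<k. (\<lambda>x. i + k * x) ` A i)" using finA by auto
  ultimately show ?thesis by (rule finite_subset)
qed

lemma digraph_layered: "digraph (layered_vertices k A) (layered_edges k A)"
  unfolding digraph_def
proof (intro conjI allI)
  show "finite (layered_vertices k A)" by (rule finite_layered_vertices)
  show "layered_edges k A \<subseteq> layered_vertices k A \<times> layered_vertices k A" by (auto simp: layered_edges_def)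
  fix v show "(v, v) \<notin> layered_edges k A" using next_layer_neq[of "v mod k"] by (auto simp: layered_edges_def)
qed

text \<open>A permutation maps the moved elements of each layer bijectively onto those of the next layer,
  so it amounts to a choice of equally large moved parts together with a cyclic family of bijections
  between them.\<close>

definition moved_part :: "(nat \<Rightarrow> nat) \<Rightarrow> nat \<Rightarrow> nat set" where
  "moved_part f i = {x \<in> A i. f (i + k * x) \<noteq> i + k * x}"

abbreviation "layered_perms \<equiv> graph_perms (layered_vertices k A) (layered_edges k A)"

lemma layered_permsD:
  assumes "f \<in> layered_perms"
  shows "f permutes layered_vertices k A"
    and "\<And>v. v \<in> layered_vertices k A \<Longrightarrow> f v \<noteq> v \<Longrightarrow>
      f v \<in> layered_vertices k A \<and> f v mod k = next_layer (v mod k)"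
  using assms by (auto simp: graph_perms_permutes layered_edges_def)

lemma moved_part_step:
  assumes f: "f \<in> layered_perms" and i: "i < k" and x: "x \<in> moved_part f i"
  shows "f (i + k * x) = next_layer i + k * (f (i + k * x) div k)" "f (i + k * x) div k \<in> moved_part f (next_layer i)"
proof -
  let ?v = "i + k * x"
  have xA: "x \<in> A i" and mvd: "f ?v \<noteq> ?v" using x by (auto simp: moved_part_def)
  have vL: "?v \<in> layered_vertices k A" using xA i by (simp add: layer_elem_mem_iff)
  have a: "f ?v \<in> layered_vertices k A" "f ?v mod k = next_layer i" using layered_permsD(2)[OF f vL mvd] i by auto
  show e: "f ?v = next_layer i + k * (f ?v div k)" using mod_mult_div_eq[of "f ?v" k] a(2) by simp
  have yA: "f ?v div k \<in> A (next_layer i)" using a by (simp add: mem_layered_vertices_iff)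
  have "f (f ?v) \<noteq> f ?v"
  proof
    assume "f (f ?v) = f ?v"
    hence "f ?v = ?v" using permutes_inj[OF layered_permsD(1)[OF f]] by (simp add: inj_eq)
    thus False using mvd by simp
  qed
  hence "f (next_layer i + k * (f ?v div k)) \<noteq> next_layer i + k * (f ?v div k)" using e by simp
  thus "f ?v div k \<in> moved_part f (next_layer i)" using yA by (simp add: moved_part_def)
qed

lemma moved_part_step_surj:
  assumes f: "f \<in> layered_perms" and i: "i < k" and y: "y \<in> moved_part f (next_layer i)"
  shows "\<exists>x \<in> moved_part f i. f (i + k * x) = next_layer i + k * y"
proof -
  let ?w = "next_layer i + k * y"
  have yA: "y \<in> A (next_layer i)" and mvd: "f ?w \<noteq> ?w" using y by (auto simp: moved_part_def)
  have wL: "?w \<in> layered_vertices k A" using yA by (simp add: layer_elem_mem_iff)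
  have fp: "f permutes layered_vertices k A" using layered_permsD(1)[OF f] .
  have "?w \<in> f ` layered_vertices k A" using permutes_image[OF fp] wL by simp
  then obtain u where u: "u \<in> layered_vertices k A" "f u = ?w" by auto
  have un: "f u \<noteq> u" using u mvd by auto
  have "f u mod k = next_layer (u mod k)" using layered_permsD(2)[OF f u(1) un] by simp
  hence "next_layer i = next_layer (u mod k)" using u(2) by simp
  hence ui: "u mod k = i" using next_layer_inj[OF i mod_k_less] by simp
  have ue: "u = i + k * (u div k)" using mod_mult_div_eq[of u k] ui by simp
  have "u div k \<in> A i" using u(1) ui by (simp add: mem_layered_vertices_iff)
  hence "u div k \<in> moved_part f i" using un ue by (simp add: moved_part_def)
  thus ?thesis using u(2) ue by metis
qed

lemma bij_betw_moved_parts: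
  assumes f: "f \<in> layered_perms" and i: "i < k"
  shows "bij_betw (\<lambda>x. f (i + k * x) div k) (moved_part f i) (moved_part f (next_layer i))"
proof -
  have fp: "f permutes layered_vertices k A" using layered_permsD(1)[OF f] .
  have "inj_on (\<lambda>x. f (i + k * x) div k) (moved_part f i)"
  proof (rule inj_onI)
    fix x x' assume x: "x \<in> moved_part f i" and x': "x' \<in> moved_part f i"
      and eq: "f (i + k * x) div k = f (i + k * x') div k"
    have "f (i + k * x) = f (i + k * x')" using moved_part_step(1)[OF f i x] moved_part_step(1)[OF f i x'] eq by metis
    hence "i + k * x = i + k * x'" using permutes_inj[OF fp] by (simp add: inj_eq)
    thus "x = x'" using k_pos by simp
  qed
  moreover have "(\<lambda>x. f (i + k * x) div k) ` moved_part f i = moved_part f (next_layer i)"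
  proof
    show "(\<lambda>x. f (i + k * x) div k) ` moved_part f i \<subseteq> moved_part f (next_layer i)"
      using moved_part_step(2)[OF f i] by auto
    show "moved_part f (next_layer i) \<subseteq> (\<lambda>x. f (i + k * x) div k) ` moved_part f i"
    proof
      fix y assume "y \<in> moved_part f (next_layer i)"
      then obtain x where "x \<in> moved_part f i" "f (i + k * x) = next_layer i + k * y"
        using moved_part_step_surj[OF f i] by blast
      thus "y \<in> (\<lambda>x. f (i + k * x) div k) ` moved_part f i" by (intro image_eqI[of _ _ x]) simp_all
    qed
  qed
  ultimately show ?thesis by (simp add: bij_betw_def)
qed

lemma moved_part_subset: "moved_part f i \<subseteq> A i" by (auto simp: moved_part_def)

lemma card_moved_part:
  assumes f: "f \<in> layered_perms" and i: "i < k"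
  shows "card (moved_part f i) = card (moved_part f 0)"
  using i
proof (induction i)
  case 0 thus ?case by simp
next
  case (Suc i)
  hence "next_layer i = Suc i" by simp
  hence "card (moved_part f (Suc i)) = card (moved_part f i)"
    using bij_betw_same_card[OF bij_betw_moved_parts[OF f, of i]] Suc by simp
  thus ?case using Suc by simp
qed

definition perms_moving :: "(nat \<Rightarrow> nat set) \<Rightarrow> (nat \<Rightarrow> nat) set" where
  "perms_moving M = {f \<in> layered_perms. \<forall>i<k. moved_part f i = M i}"

definition perm_of_bijections :: "(nat \<Rightarrow> nat set) \<Rightarrow> (nat \<Rightarrow> nat \<Rightarrow> nat) \<Rightarrow> nat \<Rightarrow> nat" where
  "perm_of_bijections M g v = (if v \<in> layered_vertices k A \<and> v div k \<in> M (v mod k)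
    then next_layer (v mod k) + k * g (v mod k) (v div k) else v)"

definition bijections_of_perm :: "(nat \<Rightarrow> nat) \<Rightarrow> nat \<Rightarrow> nat \<Rightarrow> nat" where
  "bijections_of_perm f = (\<lambda>i\<in>{..<k}. \<lambda>x\<in>moved_part f i. f (i + k * x) div k)"

abbreviation "bijection_families M \<equiv> (\<Pi>\<^sub>E i\<in>{..<k}. bijections (M i) (M (next_layer i)))"

lemma bijections_of_perm_in:
  assumes f: "f \<in> perms_moving M" shows "bijections_of_perm f \<in> bijection_families M"
proof -
  have fP: "f \<in> layered_perms" and mvM: "\<And>i. i < k \<Longrightarrow> moved_part f i = M i"
    using f by (auto simp: perms_moving_def)
  have "(\<lambda>x\<in>moved_part f i. f (i + k * x) div k) \<in> bijections (M i) (M (next_layer i))" if i: "i < k" for i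
  proof -
    have b: "bij_betw (\<lambda>x. f (i + k * x) div k) (M i) (M (next_layer i))"
      using bij_betw_moved_parts[OF fP i] mvM[OF i] mvM[OF next_layer_less] by simp
    hence "bij_betw (\<lambda>x\<in>M i. f (i + k * x) div k) (M i) (M (next_layer i))"
      by (simp add: bij_betw_restrict_eq)
    moreover have "(\<lambda>x\<in>M i. f (i + k * x) div k) \<in> M i \<rightarrow>\<^sub>E M (next_layer i)"
      using b by (auto simp: bij_betw_def)
    ultimately show ?thesis using mvM[OF i] by (simp add: bijections_def)
  qed
  thus ?thesis by (auto simp: bijections_of_perm_def)
qed

lemma perm_of_bijections_of_perm: "f \<in> perms_moving M \<Longrightarrow> perm_of_bijections M (bijections_of_perm f) = f"
proof (rule ext)
  fix v assume f: "f \<in> perms_moving M"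
  hence fP: "f \<in> layered_perms" and mvM: "\<And>i. i < k \<Longrightarrow> moved_part f i = M i"
    by (auto simp: perms_moving_def)
  show "perm_of_bijections M (bijections_of_perm f) v = f v"
  proof (cases "v \<in> layered_vertices k A \<and> v div k \<in> M (v mod k)")
    case True
    let ?i = "v mod k" and ?x = "v div k"
    have x: "?x \<in> moved_part f ?i" using True mvM[of ?i] by simp
    have ve: "v = ?i + k * ?x" by simp
    have "f v = next_layer ?i + k * (f v div k)" using moved_part_step(1)[OF fP mod_k_less x] ve by metis
    thus ?thesis using True x by (simp add: perm_of_bijections_def bijections_of_perm_def)
  next
    case False
    have "f v = v"
    proof (cases "v \<in> layered_vertices k A")
      case True
      hence xA: "v div k \<in> A (v mod k)" by (simp add: mem_layered_vertices_iff)
      have "v div k \<notin> moved_part f (v mod k)" using False True mvM[of "v mod k"] by simp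
      thus ?thesis using xA by (simp add: moved_part_def)
    next
      case False thus ?thesis using permutes_not_in[OF layered_permsD(1)[OF fP]] by simp
    qed
    thus ?thesis using False by (auto simp: perm_of_bijections_def)
  qed
qed

context
  fixes M g
  assumes MA: "\<And>i. i < k \<Longrightarrow> M i \<subseteq> A i" and g: "g \<in> bijection_families M"
begin

private lemma family_bij: "i < k \<Longrightarrow> bij_betw (g i) (M i) (M (next_layer i))"
  using g by (auto simp: bijections_def)

private lemma family_mem: "i < k \<Longrightarrow> x \<in> M i \<Longrightarrow> g i x \<in> M (next_layer i)"
  using family_bij by (auto simp: bij_betw_def)

lemma perm_of_bijections_moved:
  assumes "v \<in> layered_vertices k A" "v div k \<in> M (v mod k)"
  shows "perm_of_bijections M g v \<in> layered_vertices k A"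
    and "perm_of_bijections M g v mod k = next_layer (v mod k)"
    and "perm_of_bijections M g v div k = g (v mod k) (v div k)"
    and "perm_of_bijections M g v div k \<in> M (next_layer (v mod k))"
proof -
  have gi: "g (v mod k) (v div k) \<in> M (next_layer (v mod k))" using family_mem assms by simp
  show "perm_of_bijections M g v mod k = next_layer (v mod k)"
    and "perm_of_bijections M g v div k = g (v mod k) (v div k)"
    using assms by (simp_all add: perm_of_bijections_def)
  thus "perm_of_bijections M g v \<in> layered_vertices k A"
    and "perm_of_bijections M g v div k \<in> M (next_layer (v mod k))"
    using gi MA[of "next_layer (v mod k)"] by (auto simp: mem_layered_vertices_iff)
qed

lemma inj_on_perm_of_bijections: "inj_on (perm_of_bijections M g) (layered_vertices k A)"
proof (rule inj_onI)
  fix v v' assume v: "v \<in> layered_vertices k A" and v': "v' \<in> layered_vertices k A"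
    and eq: "perm_of_bijections M g v = perm_of_bijections M g v'"
  show "v = v'"
  proof (cases "v div k \<in> M (v mod k)"; cases "v' div k \<in> M (v' mod k)")
    assume a: "v div k \<in> M (v mod k)" and b: "v' div k \<in> M (v' mod k)"
    have "next_layer (v mod k) = next_layer (v' mod k)"
      using perm_of_bijections_moved(2)[OF v a] perm_of_bijections_moved(2)[OF v' b] eq by simp
    hence m: "v mod k = v' mod k" using next_layer_inj mod_k_less by blast
    have "g (v mod k) (v div k) = g (v mod k) (v' div k)"
      using perm_of_bijections_moved(3)[OF v a] perm_of_bijections_moved(3)[OF v' b] eq m by simp
    hence "v div k = v' div k"
      using family_bij[OF mod_k_less, of v] a b m by (auto simp: bij_betw_def inj_on_def)
    thus ?thesis using m by (metis mod_mult_div_eq)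
  next
    assume a: "v div k \<in> M (v mod k)" and b: "v' div k \<notin> M (v' mod k)"
    have "perm_of_bijections M g v' = v'" using b by (simp add: perm_of_bijections_def)
    hence "v' div k \<in> M (v' mod k)" using perm_of_bijections_moved(2,4)[OF v a] eq by simp
    thus ?thesis using b by simp
  next
    assume a: "v div k \<notin> M (v mod k)" and b: "v' div k \<in> M (v' mod k)"
    have "perm_of_bijections M g v = v" using a by (simp add: perm_of_bijections_def)
    hence "v div k \<in> M (v mod k)" using perm_of_bijections_moved(2,4)[OF v' b] eq by simp
    thus ?thesis using a by simp
  next
    assume a: "v div k \<notin> M (v mod k)" and b: "v' div k \<notin> M (v' mod k)"
    thus ?thesis using eq by (simp add: perm_of_bijections_def)
  qed
qed

lemma perm_of_bijections_permutes: "perm_of_bijections M g permutes layered_vertices k A"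
proof -
  let ?F = "perm_of_bijections M g"
  have sub: "?F ` layered_vertices k A \<subseteq> layered_vertices k A"
  proof
    fix u assume "u \<in> ?F ` layered_vertices k A"
    then obtain v where v: "v \<in> layered_vertices k A" "u = ?F v" by auto
    show "u \<in> layered_vertices k A"
    proof (cases "v div k \<in> M (v mod k)")
      case True thus ?thesis using perm_of_bijections_moved v by simp
    next
      case False thus ?thesis using v by (simp add: perm_of_bijections_def)
    qed
  qed
  have "?F ` layered_vertices k A = layered_vertices k A"
    using endo_inj_surj[OF finite_layered_vertices sub inj_on_perm_of_bijections] .
  hence "bij_betw ?F (layered_vertices k A) (layered_vertices k A)"
    using inj_on_perm_of_bijections by (simp add: bij_betw_def)
  moreover have "\<forall>x. x \<notin> layered_vertices k A \<longrightarrow> ?F x = x" by (simp add: perm_of_bijections_def)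
  ultimately show ?thesis by (simp add: bij_imp_permutes)
qed

lemma perm_of_bijections_in: "perm_of_bijections M g \<in> perms_moving M"
proof -
  let ?F = "perm_of_bijections M g"
  have "\<forall>v\<in>layered_vertices k A. ?F v = v \<or> (v, ?F v) \<in> layered_edges k A"
  proof
    fix v assume v: "v \<in> layered_vertices k A"
    show "?F v = v \<or> (v, ?F v) \<in> layered_edges k A"
    proof (cases "v div k \<in> M (v mod k)")
      case True thus ?thesis using perm_of_bijections_moved[OF v True] v by (simp add: layered_edges_def)
    next
      case False thus ?thesis by (simp add: perm_of_bijections_def)
    qed
  qed
  hence FP: "?F \<in> layered_perms" using perm_of_bijections_permutes by (simp add: graph_perms_permutes)
  have "\<forall>i<k. moved_part ?F i = M i"
  proof (intro allI impI set_eqI iffI)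
    fix i x assume i: "i < k"
    { assume x: "x \<in> moved_part ?F i"
      hence xA: "x \<in> A i" and ne: "?F (i + k * x) \<noteq> i + k * x" by (auto simp: moved_part_def)
      show "x \<in> M i"
      proof (rule ccontr)
        assume "x \<notin> M i" thus False using ne i by (simp add: perm_of_bijections_def)
      qed }
    { assume x: "x \<in> M i"
      hence xA: "x \<in> A i" using MA i by auto
      have vL: "i + k * x \<in> layered_vertices k A" using xA i by (simp add: layer_elem_mem_iff)
      have "?F (i + k * x) mod k = next_layer i" using perm_of_bijections_moved(2)[of "i + k * x"] vL x i by simp
      hence "?F (i + k * x) \<noteq> i + k * x" using next_layer_neq[OF i] i by auto
      thus "x \<in> moved_part ?F i" using xA by (simp add: moved_part_def) }
  qed
  thus ?thesis using FP by (simp add: perms_moving_def)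
qed

lemma bijections_of_perm_of_bijections: "bijections_of_perm (perm_of_bijections M g) = g"
proof (rule ext)
  fix i show "bijections_of_perm (perm_of_bijections M g) i = g i"
  proof (cases "i < k")
    case False thus ?thesis using g by (simp add: bijections_of_perm_def PiE_def extensional_def)
  next
    case True
    have mvM: "moved_part (perm_of_bijections M g) i = M i" using perm_of_bijections_in True by (simp add: perms_moving_def)
    show ?thesis
    proof (rule ext)
      fix x show "bijections_of_perm (perm_of_bijections M g) i x = g i x"
      proof (cases "x \<in> M i")
        case False
        have "g i \<in> extensional (M i)" using g True by (auto simp: PiE_def bijections_def)
        thus ?thesis using False True mvM by (simp add: bijections_of_perm_def extensional_def)
      next
        case xM: True
        have vL: "i + k * x \<in> layered_vertices k A" using xM MA[OF True] True by (auto simp: layer_elem_mem_iff)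
        have "perm_of_bijections M g (i + k * x) div k = g i x"
          using perm_of_bijections_moved(3)[of "i + k * x"] vL xM True by simp
        thus ?thesis using xM True mvM by (simp add: bijections_of_perm_def)
      qed
    qed
  qed
qed

end

lemma card_perms_moving:
  assumes MA: "\<And>i. i < k \<Longrightarrow> M i \<subseteq> A i" and cM: "\<And>i. i < k \<Longrightarrow> card (M i) = j"
  shows "card (perms_moving M) = fact j ^ k"
proof -
  have "bij_betw bijections_of_perm (perms_moving M) (bijection_families M)"
  proof (rule bij_betw_byWitness[where f' = "perm_of_bijections M"])
    show "\<forall>f\<in>perms_moving M. perm_of_bijections M (bijections_of_perm f) = f"
      using perm_of_bijections_of_perm by blast
    show "\<forall>g\<in>bijection_families M. bijections_of_perm (perm_of_bijections M g) = g"
      using bijections_of_perm_of_bijections[OF MA] by blast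
    show "bijections_of_perm ` perms_moving M \<subseteq> bijection_families M" using bijections_of_perm_in by blast
    show "perm_of_bijections M ` bijection_families M \<subseteq> perms_moving M" using perm_of_bijections_in[OF MA] by blast
  qed
  hence "card (perms_moving M) = card (bijection_families M)" by (rule bij_betw_same_card)
  also have "\<dots> = (\<Prod>i<k. card (bijections (M i) (M (next_layer i))))" by (simp add: card_PiE)
  also have "\<dots> = (\<Prod>i<k. fact j)"
  proof (rule prod.cong[OF refl])
    fix i assume i: "i \<in> {..<k}"
    have f1: "finite (M i)" using finA[of i] MA[of i] i finite_subset by auto
    have f2: "finite (M (next_layer i))" using finA[of "next_layer i"] MA[of "next_layer i"] finite_subset by auto
    have "card (M i) = card (M (next_layer i))" using cM i by simp
    thus "card (bijections (M i) (M (next_layer i))) = fact j" using card_bijections[OF f1 f2] cM i by simp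
  qed
  also have "\<dots> = fact j ^ k" by simp
  finally show ?thesis .
qed

abbreviation "moved_part_choices j \<equiv> (\<Pi>\<^sub>E i\<in>{..<k}. {S. S \<subseteq> A i \<and> card S = j})"

lemma finite_moved_part_choices: "finite (moved_part_choices j)"
proof -
  have "finite {S. S \<subseteq> A i \<and> card S = j}" if "i < k" for i
  proof -
    have "finite (Pow (A i))" using finA[OF that] by simp
    thus ?thesis by (rule finite_subset[rotated]) auto
  qed
  thus ?thesis by (intro finite_PiE) auto
qed

lemma card_moved_part_choices: "card (moved_part_choices j) = (\<Prod>i<k. card (A i) choose j)"
  by (simp add: card_PiE n_subsets finA)

lemma perms_moving_subset: "perms_moving M \<subseteq> layered_perms" by (auto simp: perms_moving_def)

lemma finite_layered_perms: "finite layered_perms"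
  using digraph_layered by (intro finite_graph_perms) (simp add: digraph_def)

lemma perms_moving_disjoint:
  assumes "M \<in> extensional {..<k}" "M' \<in> extensional {..<k}" "M \<noteq> M'"
  shows "perms_moving M \<inter> perms_moving M' = {}"
proof (rule ccontr)
  assume "perms_moving M \<inter> perms_moving M' \<noteq> {}"
  then obtain f where "f \<in> perms_moving M" "f \<in> perms_moving M'" by blast
  hence "\<And>i. i < k \<Longrightarrow> M i = M' i" by (auto simp: perms_moving_def)
  hence "M = M'" using assms(1,2) by (intro extensionalityI[of M "{..<k}" M']) auto
  thus False using assms(3) by simp
qed

lemma UN_perms_moving:
  "(\<Union>M\<in>moved_part_choices j. perms_moving M) = {f \<in> layered_perms. card (moved_part f 0) = j}"
proof (intro equalityI subsetI)
  fix f assume "f \<in> (\<Union>M\<in>moved_part_choices j. perms_moving M)"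
  then obtain M where M: "M \<in> moved_part_choices j" and f: "f \<in> perms_moving M" by blast
  have "0 \<in> {..<k}" using k_pos by simp
  hence "card (moved_part f 0) = j" using M f by (simp add: perms_moving_def PiE_iff)
  thus "f \<in> {f \<in> layered_perms. card (moved_part f 0) = j}"
    using f by (simp add: perms_moving_def)
next
  fix f assume "f \<in> {f \<in> layered_perms. card (moved_part f 0) = j}"
  hence f: "f \<in> layered_perms" and j: "card (moved_part f 0) = j" by auto
  have "(\<lambda>i\<in>{..<k}. moved_part f i) \<in> moved_part_choices j"
    using card_moved_part[OF f] moved_part_subset j by (simp add: PiE_iff)
  moreover have "f \<in> perms_moving (\<lambda>i\<in>{..<k}. moved_part f i)"
    using f by (simp add: perms_moving_def)
  ultimately show "f \<in> (\<Union>M\<in>moved_part_choices j. perms_moving M)" by blast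
qed

lemma card_perms_moving_card:
  "card {f \<in> layered_perms. card (moved_part f 0) = j} = (\<Prod>i<k. card (A i) choose j) * fact j ^ k"
proof -
  have "card (\<Union>M\<in>moved_part_choices j. perms_moving M) = (\<Sum>M\<in>moved_part_choices j. card (perms_moving M))"
    using finite_moved_part_choices finite_subset[OF perms_moving_subset finite_layered_perms]
    by (intro card_UN_disjoint ballI impI perms_moving_disjoint) (simp_all add: PiE_iff)
  also have "\<dots> = (\<Sum>M\<in>moved_part_choices j. fact j ^ k)"
    by (intro sum.cong refl card_perms_moving) (simp_all add: PiE_iff)
  finally show ?thesis by (simp add: UN_perms_moving card_moved_part_choices)
qed

lemma card_graph_perms_layered:
  "card layered_perms = (\<Sum>j\<le>card (A 0). (\<Prod>i<k. card (A i) choose j) * fact j ^ k)"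
proof -
  have "(\<lambda>f. card (moved_part f 0)) ` layered_perms \<subseteq> {..card (A 0)}"
    using card_mono[OF finA[OF k_pos] moved_part_subset] by auto
  hence "(\<Sum>j\<le>card (A 0). \<Sum>f\<in>{f \<in> layered_perms. card (moved_part f 0) = j}. 1)
      = (\<Sum>f\<in>layered_perms. 1 :: nat)"
    by (rule sum.group[OF finite_layered_perms finite_atMost])
  thus ?thesis by (simp only: card_eq_sum[symmetric] card_perms_moving_card)
qed

lemma graph_derangements_layered: "graph_derangements (layered_vertices k A) (layered_edges k A) = perms_moving A"
proof (intro set_eqI iffI)
  fix f assume "f \<in> graph_derangements (layered_vertices k A) (layered_edges k A)"
  hence fP: "f \<in> layered_perms" and d: "\<forall>v\<in>layered_vertices k A. f v \<noteq> v"
    by (auto simp: graph_derangements_def)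
  have "\<forall>i<k. moved_part f i = A i"
  proof (intro allI impI)
    fix i assume i: "i < k"
    show "moved_part f i = A i"
    proof
      show "moved_part f i \<subseteq> A i" by (rule moved_part_subset)
      show "A i \<subseteq> moved_part f i"
      proof
        fix x assume x: "x \<in> A i"
        hence "i + k * x \<in> layered_vertices k A" using i by (simp add: layer_elem_mem_iff)
        hence "f (i + k * x) \<noteq> i + k * x" using d by blast
        thus "x \<in> moved_part f i" using x by (simp add: moved_part_def)
      qed
    qed
  qed
  thus "f \<in> perms_moving A" using fP by (simp add: perms_moving_def)
next
  fix f assume "f \<in> perms_moving A"
  hence fP: "f \<in> layered_perms" and m: "\<forall>i<k. moved_part f i = A i" by (auto simp: perms_moving_def)
  have "\<forall>v\<in>layered_vertices k A. f v \<noteq> v"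
  proof
    fix v assume v: "v \<in> layered_vertices k A"
    have "v div k \<in> moved_part f (v mod k)" using m v by (simp add: mem_layered_vertices_iff)
    thus "f v \<noteq> v" by (simp add: moved_part_def)
  qed
  thus "f \<in> graph_derangements (layered_vertices k A) (layered_edges k A)" using fP by (simp add: graph_derangements_def)
qed

lemma card_graph_derangements_layered:
  assumes "\<And>i. i < k \<Longrightarrow> card (A i) = n"
  shows "card (graph_derangements (layered_vertices k A) (layered_edges k A)) = fact n ^ k"
  unfolding graph_derangements_layered using assms by (intro card_perms_moving) auto

lemma card_graph_derangements_layered_unbalanced:
  assumes "i < k" "card (A i) \<noteq> card (A 0)"
  shows "card (graph_derangements (layered_vertices k A) (layered_edges k A)) = 0"
proof -
  have "perms_moving A = {}"
  proof (rule ccontr)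
    assume "perms_moving A \<noteq> {}"
    then obtain f where f: "f \<in> perms_moving A" by blast
    hence fP: "f \<in> layered_perms" and m: "\<forall>i<k. moved_part f i = A i" by (auto simp: perms_moving_def)
    have "card (moved_part f i) = card (moved_part f 0)" using card_moved_part[OF fP assms(1)] .
    thus False using m assms k_pos by simp
  qed
  thus ?thesis unfolding graph_derangements_layered by simp
qed

end

lemma layered_vertices_less:
  assumes "\<And>i. i < k \<Longrightarrow> A i \<subseteq> {..<m}" "v \<in> layered_vertices k A" "0 < k"
  shows "v < k * m"
proof -
  have "v div k \<in> A (v mod k)" "v mod k < k" using assms(2,3) by (simp_all add: layered_vertices_def)
  hence "v div k < m" using assms(1) by blast
  hence "Suc (v div k) \<le> m" by simp
  hence "k * Suc (v div k) \<le> k * m" by (rule mult_le_mono2)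
  moreover have "v < k * Suc (v div k)" using assms(3)
    by (metis add.commute div_mult_mod_eq mod_less_divisor mult.commute mult_Suc_right nat_add_left_cancel_less)
  ultimately show ?thesis by simp
qed

lemma layered_vertices_delete:
  assumes "s < k"
  shows "layered_vertices k A - {s} = layered_vertices k (A(s := A s - {0}))"
proof (rule set_eqI)
  fix v
  have "v = s \<longleftrightarrow> v mod k = s \<and> v div k = 0"
  proof
    assume "v mod k = s \<and> v div k = 0"
    thus "v = s" using div_mult_mod_eq[of v k] by simp
  qed (use assms in simp)
  thus "v \<in> layered_vertices k A - {s} \<longleftrightarrow> v \<in> layered_vertices k (A(s := A s - {0}))"
    by (auto simp: layered_vertices_def)
qed

lemma layered_edges_delete:
  assumes "s < k"
  shows "delete_vertex (layered_edges k A) s = layered_edges k (A(s := A s - {0}))"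
proof -
  have "x \<in> layered_vertices k (A(s := A s - {0})) \<longleftrightarrow> x \<in> layered_vertices k A \<and> x \<noteq> s" for x
    using layered_vertices_delete[OF assms, of A] by blast
  thus ?thesis unfolding delete_vertex_def layered_edges_def by (simp only: case_prod_beta) fastforce
qed

text \<open>Starting from the layered digraph, split the vertices \<open>0, \<dots>, t - 1\<close> one after the other; vertex
  \<open>s < k\<close> is element \<open>0\<close> of layer \<open>s\<close>, and its new copy \<open>k * m + s\<close> is fresh as long as all layers lie
  in \<open>{..<m}\<close>.\<close>

primrec iter_split_vertices :: "nat \<Rightarrow> nat \<Rightarrow> (nat \<Rightarrow> nat set) \<Rightarrow> nat \<Rightarrow> nat set" where
  "iter_split_vertices k m A 0 = layered_vertices k A"
| "iter_split_vertices k m A (Suc t) = insert (k * m + t) (iter_split_vertices k m A t)"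

primrec iter_split_edges :: "nat \<Rightarrow> nat \<Rightarrow> (nat \<Rightarrow> nat set) \<Rightarrow> nat \<Rightarrow> (nat \<times> nat) set" where
  "iter_split_edges k m A 0 = layered_edges k A"
| "iter_split_edges k m A (Suc t) = split_vertex (iter_split_edges k m A t) t (k * m + t)"

definition shrink_layers :: "(nat \<Rightarrow> nat set) \<Rightarrow> nat set \<Rightarrow> nat \<Rightarrow> nat set" where
  "shrink_layers A S = (\<lambda>i. if i \<in> S then A i - {0} else A i)"

lemma iter_split_vertices_eq:
  "iter_split_vertices k m A t = layered_vertices k A \<union> {k * m + s | s. s < t}"
  by (induction t) (auto simp: less_Suc_eq)

lemma sum_Pow_insert:
  assumes "finite X" "a \<notin> X"
  shows "(\<Sum>S\<in>Pow (insert a X). f S) = (\<Sum>S\<in>Pow X. f S) + (\<Sum>S\<in>Pow X. f (insert a S))"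
proof -
  have "Pow X \<inter> insert a ` Pow X = {}" "inj_on (insert a) (Pow X)"
    using assms(2) by (auto simp: inj_on_def)
  thus ?thesis using assms(1) by (simp add: Pow_insert sum.union_disjoint sum.reindex)
qed

context
  fixes k m :: nat
  assumes k: "2 \<le> k" and m: "1 \<le> m"
begin

lemma iter_split_delete:
  assumes "t \<le> s" "s < k"
  shows "iter_split_vertices k m A t - {s} = iter_split_vertices k m (A(s := A s - {0})) t
    \<and> delete_vertex (iter_split_edges k m A t) s = iter_split_edges k m (A(s := A s - {0})) t"
  using assms(1)
proof (induction t)
  case 0
  show ?case unfolding iter_split_vertices.simps iter_split_edges.simps
    using layered_vertices_delete[OF assms(2)] layered_edges_delete[OF assms(2)] by blast
next
  case (Suc t)
  have "s \<noteq> k * m + t"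
    using m assms(2) mult_le_mono2[of 1 m k] by linarith
  moreover have "s \<noteq> t" using Suc by simp
  ultimately show ?case
    using Suc delete_split_vertex[of s t "k * m + t"] by (simp add: insert_Diff_if)
qed

lemma iter_split_split_vertex:
  assumes layers: "\<And>i. i < k \<Longrightarrow> A i \<subseteq> {..<m}" and "t < k" "0 \<in> A t"
  shows "t \<in> iter_split_vertices k m A t" "k * m + t \<notin> iter_split_vertices k m A t"
proof -
  show "t \<in> iter_split_vertices k m A t"
    using assms(2,3) by (simp add: iter_split_vertices_eq layered_vertices_def)
  have "v < k * m" if "v \<in> layered_vertices k A" for v
    using layered_vertices_less[OF layers that] k by simp
  thus "k * m + t \<notin> iter_split_vertices k m A t"
    by (auto simp: iter_split_vertices_eq)
qed

lemma digraph_iter_split: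
  assumes layers: "\<And>i. i < k \<Longrightarrow> A i \<subseteq> {..<m}" and "t \<le> k" "\<And>i. i < t \<Longrightarrow> 0 \<in> A i"
  shows "digraph (iter_split_vertices k m A t) (iter_split_edges k m A t)"
  using assms(2,3)
proof (induction t)
  case 0
  have "\<And>i. i < k \<Longrightarrow> finite (A i)" using layers finite_subset by blast
  thus ?case using digraph_layered k by simp
next
  case (Suc t)
  have "t \<in> iter_split_vertices k m A t" "k * m + t \<notin> iter_split_vertices k m A t"
    using iter_split_split_vertex[of A t] layers Suc.prems by auto
  thus ?case using Suc digraph_split_vertex by simp
qed

lemma iter_split_count:
  fixes count :: "nat set \<Rightarrow> (nat \<times> nat) set \<Rightarrow> nat"
  assumes split: "\<And>V E v w. digraph V E \<Longrightarrow> v \<in> V \<Longrightarrow> w \<notin> V \<Longrightarrow>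
      count (insert w V) (split_vertex E v w) = count V E + count (V - {v}) (delete_vertex E v)"
    and layers: "\<And>i. i < k \<Longrightarrow> A i \<subseteq> {..<m}" and "t \<le> k" and "\<And>i. i < t \<Longrightarrow> 0 \<in> A i"
  shows "count (iter_split_vertices k m A t) (iter_split_edges k m A t)
    = (\<Sum>S\<in>Pow {..<t}. count (layered_vertices k (shrink_layers A S)) (layered_edges k (shrink_layers A S)))"
  using layers assms(3,4)
proof (induction t arbitrary: A)
  case 0
  thus ?case by (simp add: shrink_layers_def)
next
  case (Suc t)
  let ?A' = "A(t := A t - {0})"
  let ?c = "\<lambda>A S. count (layered_vertices k (shrink_layers A S)) (layered_edges k (shrink_layers A S))"
  have "t \<in> iter_split_vertices k m A t" "k * m + t \<notin> iter_split_vertices k m A t"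
    using iter_split_split_vertex[of A t] Suc.prems by auto
  moreover have "digraph (iter_split_vertices k m A t) (iter_split_edges k m A t)"
    using Suc.prems by (intro digraph_iter_split) auto
  ultimately have "count (iter_split_vertices k m A (Suc t)) (iter_split_edges k m A (Suc t))
      = count (iter_split_vertices k m A t) (iter_split_edges k m A t)
        + count (iter_split_vertices k m ?A' t) (iter_split_edges k m ?A' t)"
    using split iter_split_delete[of t t A] Suc.prems by simp
  also have "count (iter_split_vertices k m ?A' t) (iter_split_edges k m ?A' t)
      = (\<Sum>S\<in>Pow {..<t}. ?c ?A' S)"
    by (rule Suc.IH) (use Suc.prems in auto)
  also have "count (iter_split_vertices k m A t) (iter_split_edges k m A t)
      = (\<Sum>S\<in>Pow {..<t}. ?c A S)"
    by (rule Suc.IH) (use Suc.prems in auto)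
  also have "(\<Sum>S\<in>Pow {..<t}. ?c ?A' S) = (\<Sum>S\<in>Pow {..<t}. ?c A (insert t S))"
    by (intro sum.cong refl arg_cong2[where f = count] arg_cong[where f = "layered_vertices k"]
        arg_cong[where f = "layered_edges k"]) (auto simp: shrink_layers_def fun_eq_iff)
  also have "(\<Sum>S\<in>Pow {..<t}. ?c A S) + \<dots> = (\<Sum>S\<in>Pow {..<Suc t}. ?c A S)"
    by (simp add: lessThan_Suc sum_Pow_insert)
  finally show ?case .
qed

end

lemma card_shrink_uniform_layers:
  "card (shrink_layers (\<lambda>_. {..<m}) S i) = (if i \<in> S then m - 1 else m)"
  by (cases "m = 0") (simp_all add: shrink_layers_def)

text \<open>The permutations of the layered digraph with \<open>m\<close> elements per layer, element \<open>0\<close> removed from the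
  layers in \<open>S\<close>, that move \<open>j\<close> elements of each layer.\<close>

definition perm_count_term :: "nat \<Rightarrow> nat \<Rightarrow> nat set \<Rightarrow> nat \<Rightarrow> nat" where
  "perm_count_term k m S j = (\<Prod>i<k. (if i \<in> S then m - 1 else m) choose j) * fact j ^ k"

lemma perm_count_term_top:
  assumes "S \<subseteq> {..<k}" "1 \<le> m"
  shows "perm_count_term k m S m = (if S = {} then fact m ^ k else 0)"
proof (cases "S = {}")
  case False
  then obtain s where "s \<in> S" by blast
  hence "\<exists>i\<in>{..<k}. (if i \<in> S then m - 1 else m) choose m = 0" using assms by force
  hence "(\<Prod>i<k. (if i \<in> S then m - 1 else m) choose m) = 0" by (rule prod_zero[rotated]) simp
  thus ?thesis using False by (simp add: perm_count_term_def)
qed (simp add: perm_count_term_def)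

lemma perm_count_term_pred:
  assumes S: "S \<subseteq> {..<k}" and m: "1 \<le> m"
  shows "perm_count_term k m S (m - 1) * m ^ card S = fact m ^ k"
proof -
  have "m choose (m - 1) = m" using m by (metis binomial_symmetric choose_one diff_diff_cancel)
  hence "(\<Prod>i<k. (if i \<in> S then m - 1 else m) choose (m - 1)) = (\<Prod>i<k. if i \<in> S then 1 else m)"
    by (intro prod.cong refl) simp
  also have "\<dots> = m ^ card ({..<k} - S)"
    by (subst prod.mono_neutral_cong_right[of "{..<k}" "{..<k} - S" _ "\<lambda>_. m"]) auto
  finally have "perm_count_term k m S (m - 1) * m ^ card S = m ^ (card ({..<k} - S) + card S) * fact (m - 1) ^ k"
    by (simp add: perm_count_term_def power_add)
  also have "card ({..<k} - S) + card S = k"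
    using S card_mono[OF finite_lessThan S] by (simp add: card_Diff_subset finite_subset)
  also have "m ^ k * fact (m - 1) ^ k = fact m ^ k"
    using m by (simp add: fact_reduce[of m] power_mult_distrib)
  finally show ?thesis .
qed

lemma perm_count_term_low:
  assumes j: "j + 2 \<le> m"
  shows "perm_count_term k m S j * 2 ^ k \<le> fact m ^ k"
proof -
  have "(\<Prod>i<k. (if i \<in> S then m - 1 else m) choose j) \<le> (\<Prod>i<k. m choose j)"
    by (rule prod_mono) (auto intro: binomial_right_mono)
  hence "perm_count_term k m S j * 2 ^ k \<le> (2 * (m choose j) * fact j) ^ k"
    by (simp add: perm_count_term_def power_mult_distrib)
  also have "\<dots> \<le> fact m ^ k"
  proof (rule power_mono)
    have "fact j * fact (m - j) * (m choose j) = fact m" using j by (intro binomial_fact_lemma) simp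
    moreover have "fact 2 \<le> (fact (m - j) :: nat)" using j by (intro fact_mono_nat) simp
    ultimately show "2 * (m choose j) * fact j \<le> fact m"
      by (metis fact_2 mult.commute mult_le_mono2 mult.assoc)
  qed simp
  finally show ?thesis .
qed

abbreviation uniform_split_vertices :: "nat \<Rightarrow> nat \<Rightarrow> nat \<Rightarrow> nat set" where
  "uniform_split_vertices k m t \<equiv> iter_split_vertices k m (\<lambda>_. {..<m}) t"

abbreviation uniform_split_edges :: "nat \<Rightarrow> nat \<Rightarrow> nat \<Rightarrow> (nat \<times> nat) set" where
  "uniform_split_edges k m t \<equiv> iter_split_edges k m (\<lambda>_. {..<m}) t"

lemma card_graph_perms_uniform_split:
  assumes k: "2 \<le> k" and m: "1 \<le> m" and t: "t \<le> k"
  shows "card (graph_perms (uniform_split_vertices k m t) (uniform_split_edges k m t))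
    = (\<Sum>S\<in>Pow {..<t}. \<Sum>j\<le>m. perm_count_term k m S j)"
proof -
  let ?B = "shrink_layers (\<lambda>_. {..<m})"
  have "card (graph_perms (uniform_split_vertices k m t) (uniform_split_edges k m t))
      = (\<Sum>S\<in>Pow {..<t}. card (graph_perms (layered_vertices k (?B S)) (layered_edges k (?B S))))"
    using k m t by (intro iter_split_count card_graph_perms_split_vertex) auto
  also have "\<dots> = (\<Sum>S\<in>Pow {..<t}. \<Sum>j\<le>m. perm_count_term k m S j)"
  proof (intro sum.cong refl)
    fix S assume S: "S \<in> Pow {..<t}"
    have "\<And>i. i < k \<Longrightarrow> finite (?B S i)" by (simp add: shrink_layers_def)
    hence "card (graph_perms (layered_vertices k (?B S)) (layered_edges k (?B S)))
        = (\<Sum>j\<le>card (?B S 0). perm_count_term k m S j)"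
      using card_graph_perms_layered[OF k] by (simp add: card_shrink_uniform_layers perm_count_term_def)
    also have "\<dots> = (\<Sum>j\<le>m. perm_count_term k m S j)"
    proof (cases "0 \<in> S")
      case True
      have "S \<subseteq> {..<k}" using S t by auto
      hence "perm_count_term k m S m = 0" using perm_count_term_top[of S k m] m True by auto
      moreover have "m = Suc (m - 1)" using m by simp
      ultimately show ?thesis using True by (metis sum.atMost_Suc add_0_right card_shrink_uniform_layers)
    qed (simp add: card_shrink_uniform_layers)
    finally show "card (graph_perms (layered_vertices k (?B S)) (layered_edges k (?B S)))
        = (\<Sum>j\<le>m. perm_count_term k m S j)" .
  qed
  finally show ?thesis .
qed

lemma card_graph_derangements_uniform_split:
  assumes k: "2 \<le> k" and m: "1 \<le> m" and t: "t < k"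
  shows "card (graph_derangements (uniform_split_vertices k m t) (uniform_split_edges k m t)) = fact m ^ k"
proof -
  let ?B = "shrink_layers (\<lambda>_. {..<m})"
  have "card (graph_derangements (uniform_split_vertices k m t) (uniform_split_edges k m t))
      = (\<Sum>S\<in>Pow {..<t}. card (graph_derangements (layered_vertices k (?B S)) (layered_edges k (?B S))))"
    using k m t by (intro iter_split_count card_graph_derangements_split_vertex) auto
  also have "\<dots> = (\<Sum>S\<in>Pow {..<t}. if S = {} then fact m ^ k else 0)"
  proof (intro sum.cong refl)
    fix S assume S: "S \<in> Pow {..<t}"
    have fin: "\<And>i. i < k \<Longrightarrow> finite (?B S i)" by (simp add: shrink_layers_def)
    show "card (graph_derangements (layered_vertices k (?B S)) (layered_edges k (?B S)))
        = (if S = {} then fact m ^ k else 0)"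
    proof (cases "S = {}")
      case True
      thus ?thesis using card_graph_derangements_layered[OF k fin] by (simp add: shrink_layers_def)
    next
      case False
      text \<open>Layer \<open>k - 1 \<ge> t\<close> keeps \<open>m\<close> vertices, while some layer lost one.\<close>
      then obtain s where s: "s \<in> S" by blast
      have "k - 1 \<notin> S" "s < k" "k - 1 < k" using S s t by auto
      have "\<exists>i<k. card (?B S i) \<noteq> card (?B S 0)"
      proof (cases "0 \<in> S")
        case True
        thus ?thesis using \<open>k - 1 \<notin> S\<close> \<open>k - 1 < k\<close> m
          by (intro exI[of _ "k - 1"]) (simp add: card_shrink_uniform_layers)
      next
        case False
        thus ?thesis using s \<open>s < k\<close> m by (intro exI[of _ s]) (simp add: card_shrink_uniform_layers)
      qed
      thus ?thesis using card_graph_derangements_layered_unbalanced[OF k fin] \<open>S \<noteq> {}\<close> by auto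
    qed
  qed
  also have "\<dots> = fact m ^ k" by (simp add: sum.If_cases)
  finally show ?thesis .
qed

lemma sum_perm_count_term_pred:
  assumes t: "t \<le> k" and m: "1 \<le> m"
  shows "(\<Sum>S\<in>Pow {..<t}. real (perm_count_term k m S (m - 1))) = real (fact m ^ k) * (1 + 1 / real m) ^ t"
proof -
  have "(\<Sum>S\<in>Pow {..<t}. real (perm_count_term k m S (m - 1)))
      = (\<Sum>S\<in>Pow {..<t}. real (fact m ^ k) * (1 / real m) ^ card S)"
  proof (intro sum.cong refl)
    fix S assume "S \<in> Pow {..<t}"
    hence "real (perm_count_term k m S (m - 1)) * real m ^ card S = real (fact m ^ k)"
      using perm_count_term_pred[of S k m] t m by (metis PowD of_nat_mult of_nat_power order.trans lessThan_subset_iff)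
    thus "real (perm_count_term k m S (m - 1)) = real (fact m ^ k) * (1 / real m) ^ card S"
      using m by (simp add: field_simps power_one_over)
  qed
  also have "\<dots> = real (fact m ^ k) * (1 + 1 / real m) ^ t"
    using prod_add[of "{..<t}" "\<lambda>_. 1 / real m" "\<lambda>_. 1"]
    by (simp add: sum_distrib_left[symmetric] add.commute)
  finally show ?thesis .
qed

lemma card_graph_perms_uniform_split_bounds:
  assumes k: "2 \<le> k" and m: "2 \<le> m" and t: "t < k"
  defines "P \<equiv> real (card (graph_perms (uniform_split_vertices k m t) (uniform_split_edges k m t)))"
    and "X \<equiv> real (fact m ^ k)"
  shows "X * (1 + (1 + 1 / real m) ^ t) \<le> P"
    and "P \<le> X * (1 + (1 + 1 / real m) ^ t) + 2 ^ t * (real m - 1) / 2 ^ k * X"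
proof -
  obtain n where n: "m = Suc (Suc n)" using m by (metis add_2_eq_Suc le_Suc_ex)
  have subset: "S \<subseteq> {..<k}" if "S \<in> Pow {..<t}" for S using that t by auto
  text \<open>Only the terms \<open>j = m\<close> (the derangements) and \<open>j = m - 1\<close> are of order \<open>X\<close>.\<close>
  define L where "L = (\<Sum>S\<in>Pow {..<t}. \<Sum>j\<le>n. real (perm_count_term k m S j))"
  have "(\<Sum>S\<in>Pow {..<t}. real (perm_count_term k m S m)) = (\<Sum>S\<in>Pow {..<t}. if S = {} then X else 0)"
    using perm_count_term_top[OF subset] m by (intro sum.cong refl) (simp add: X_def)
  hence top: "(\<Sum>S\<in>Pow {..<t}. real (perm_count_term k m S m)) = X" by (simp add: sum.If_cases)
  have second: "(\<Sum>S\<in>Pow {..<t}. real (perm_count_term k m S (m - 1))) = X * (1 + 1 / real m) ^ t"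
    unfolding X_def using t m by (intro sum_perm_count_term_pred) simp_all
  have "P = (\<Sum>S\<in>Pow {..<t}. \<Sum>j\<le>m. real (perm_count_term k m S j))"
    unfolding P_def using card_graph_perms_uniform_split[OF k _ less_imp_le[OF t]] m by simp
  also have "\<dots> = L + (\<Sum>S\<in>Pow {..<t}. real (perm_count_term k m S (m - 1)))
      + (\<Sum>S\<in>Pow {..<t}. real (perm_count_term k m S m))"
    unfolding L_def using n by (simp add: sum.distrib)
  finally have "P = L + X * (1 + 1 / real m) ^ t + X" by (simp only: second top)
  moreover have "0 \<le> L" unfolding L_def by (intro sum_nonneg) simp
  moreover have "L \<le> 2 ^ t * (real m - 1) / 2 ^ k * X"
  proof -
    have "L \<le> (\<Sum>S\<in>Pow {..<t}. \<Sum>j\<le>n. X / 2 ^ k)"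
      unfolding L_def
    proof (intro sum_mono)
      fix S j assume "j \<in> {..n}"
      hence "perm_count_term k m S j * 2 ^ k \<le> fact m ^ k" using n by (intro perm_count_term_low) simp
      hence "real (perm_count_term k m S j) * 2 ^ k \<le> X"
        unfolding X_def by (metis of_nat_le_iff of_nat_mult of_nat_numeral of_nat_power)
      thus "real (perm_count_term k m S j) \<le> X / 2 ^ k" by (simp add: field_simps)
    qed
    also have "\<dots> = 2 ^ t * (real m - 1) / 2 ^ k * X" using n by (simp add: card_Pow)
    finally show ?thesis .
  qed
  ultimately show "X * (1 + (1 + 1 / real m) ^ t) \<le> P"
    and "P \<le> X * (1 + (1 + 1 / real m) ^ t) + 2 ^ t * (real m - 1) / 2 ^ k * X"
    by (simp_all add: algebra_simps)
qed

lemma abs_ratio_sub_inverse_le: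
  fixes X P a w B :: real
  assumes X: "0 < X" and a: "0 \<le> a" and w: "0 \<le> w" and B: "0 \<le> B"
    and lower: "X * (1 + a) \<le> P" and upper: "P \<le> X * (1 + a) + B * X"
  shows "\<bar>X / P - 1 / (1 + w)\<bar> \<le> \<bar>a - w\<bar> + B"
proof -
  define q where "q = P / X"
  have q: "1 + a \<le> q" "q \<le> 1 + a + B" using lower upper X by (simp_all add: q_def field_simps)
  have qw: "1 \<le> q * (1 + w)" using q(1) a w mult_mono[of 1 q 1 "1 + w"] by simp
  have "X / P = 1 / q" using X by (simp add: q_def)
  also have "1 / q - 1 / (1 + w) = (1 + w - q) / (q * (1 + w))"
    using q(1) a w by (simp add: field_simps)
  hence "\<bar>1 / q - 1 / (1 + w)\<bar> = \<bar>1 + w - q\<bar> / (q * (1 + w))"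
    using qw by (simp add: abs_divide)
  also have "\<dots> \<le> \<bar>1 + w - q\<bar>"
    using qw mult_right_mono[OF qw abs_ge_zero[of "1 + w - q"]] by (simp add: divide_le_eq mult.commute)
  also have "\<dots> \<le> \<bar>a - w\<bar> + B" using q B by linarith
  finally show ?thesis .
qed

lemma dp_ratio_uniform_split:
  assumes k: "2 \<le> k" and m: "2 \<le> m" and t: "t < k" and w: "0 \<le> w"
  shows "\<bar>dp_ratio (uniform_split_vertices k m t) (uniform_split_edges k m t) - 1 / (1 + w)\<bar>
    \<le> \<bar>(1 + 1 / real m) ^ t - w\<bar> + 2 ^ t * (real m - 1) / 2 ^ k"
proof -
  have "real (card (graph_derangements (uniform_split_vertices k m t) (uniform_split_edges k m t)))
      = real (fact m ^ k)"
    using card_graph_derangements_uniform_split[OF k _ t] m by simp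
  thus ?thesis unfolding dp_ratio_def using m w card_graph_perms_uniform_split_bounds[OF k m t]
    by (intro abs_ratio_sub_inverse_le) simp_all
qed

lemma power_approx:
  fixes w \<delta> :: real
  assumes w: "1 \<le> w" and \<delta>: "0 < \<delta>"
  shows "\<exists>m t. 2 \<le> m \<and> \<bar>(1 + 1 / real m) ^ t - w\<bar> < \<delta>"
proof -
  obtain m :: nat where "w / \<delta> < real m" "2 \<le> m"
    using reals_Archimedean2[of "max (w / \<delta>) 2"] by (metis max.strict_boundedE of_nat_le_iff
        of_nat_numeral less_imp_le of_nat_less_iff nat_less_real_le)
  hence m: "w / real m < \<delta>" "2 \<le> m" using \<delta> by (auto simp: field_simps)
  define c where "c = 1 + 1 / real m"
  have c: "1 < c" using m by (simp add: c_def)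
  have ex: "\<exists>t. w \<le> c ^ t" using real_arch_pow[OF c] by (auto intro: less_imp_le)
  text \<open>Take the least power of \<open>c\<close> above \<open>w\<close>; it overshoots by at most a factor \<open>c\<close>.\<close>
  define t where "t = (LEAST t. w \<le> c ^ t)"
  have above: "w \<le> c ^ t" unfolding t_def by (rule LeastI_ex[OF ex])
  have "c ^ t - w \<le> w / real m"
  proof (cases t)
    case 0 thus ?thesis using w above m by simp
  next
    case (Suc s)
    hence "c ^ s < w" using not_less_Least[of s "\<lambda>t. w \<le> c ^ t"] unfolding t_def by simp
    hence "c * c ^ s \<le> c * w" using c by simp
    thus ?thesis using Suc by (simp add: c_def field_simps)
  qed
  thus ?thesis using above m unfolding c_def by (intro exI[of _ m] exI[of _ t]) simp
qed

lemma geometric_tail_small: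
  fixes \<delta> :: real
  assumes "0 < \<delta>"
  shows "\<exists>k. t < k \<and> 2 \<le> k \<and> 2 ^ t * (real m - 1) / 2 ^ k < \<delta>"
proof -
  obtain n where n: "(1 / 2) ^ n < \<delta> / (real m + 1)"
    using real_arch_pow_inv[of "\<delta> / (real m + 1)" "1 / 2"] assms by auto
  have "2 ^ t * (real m - 1) / 2 ^ (t + n + 2) = (real m - 1) / 4 * (1 / 2) ^ n"
    by (simp add: power_add field_simps)
  also have "\<dots> < \<delta>"
  proof -
    have "(real m - 1) / 4 * (1 / 2) ^ n \<le> (real m + 1) * (1 / 2) ^ n"
      by (intro mult_right_mono) simp_all
    also have "\<dots> < \<delta>" using n by (simp add: field_simps)
    finally show ?thesis .
  qed
  finally show ?thesis by (intro exI[of _ "t + n + 2"]) simp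
qed

theorem mainTheorem1:
  fixes r \<epsilon> :: real
  assumes "0 \<le> r" and "r \<le> 1/2" and "\<epsilon> > 0"
  shows "\<exists>(V :: nat set) E. digraph V E \<and> V \<noteq> {} \<and> \<bar>dp_ratio V E - r\<bar> < \<epsilon>"
proof -
  text \<open>Replace \<open>r\<close> by a nearby positive target \<open>\<rho> = 1 / (1 + w)\<close>.\<close>
  define \<rho> where "\<rho> = max r (min (\<epsilon> / 2) (1 / 2))"
  have \<rho>: "0 < \<rho>" "\<rho> \<le> 1 / 2" "\<bar>\<rho> - r\<bar> \<le> \<epsilon> / 2" using assms by (auto simp: \<rho>_def)
  define w where "w = 1 / \<rho> - 1"
  have w: "1 \<le> w" "\<rho> = 1 / (1 + w)" using \<rho> by (simp_all add: w_def field_simps)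
  obtain m t where m: "2 \<le> m" and approx: "\<bar>(1 + 1 / real m) ^ t - w\<bar> < \<epsilon> / 4"
    using power_approx[OF w(1)] assms(3) by (meson zero_less_divide_iff zero_less_numeral)
  obtain k where k: "t < k" "2 \<le> k" and tail: "2 ^ t * (real m - 1) / 2 ^ k < \<epsilon> / 4"
    using geometric_tail_small assms(3) by (meson zero_less_divide_iff zero_less_numeral)
  let ?V = "uniform_split_vertices k m t" and ?E = "uniform_split_edges k m t"
  have "digraph ?V ?E" using k m by (intro digraph_iter_split) auto
  moreover have "0 \<in> ?V" using k m by (simp add: iter_split_vertices_eq layered_vertices_def)
  moreover have "\<bar>dp_ratio ?V ?E - \<rho>\<bar> < \<epsilon> / 2"
    using dp_ratio_uniform_split[OF k(2) m k(1), of w] w approx tail by linarith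
  moreover have "\<bar>dp_ratio ?V ?E - r\<bar> < \<epsilon>" using calculation(3) \<rho>(3) by linarith
  ultimately show ?thesis by blast
qed

end
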